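(* For $a\in[0,1)$, $m\in\mathbb{N}$ and $\theta\in[-\pi,\pi]\setminus\{0\}$ let \[ g_m(\theta;a):=\frac{|\sin(m\theta)-a\sin((m-1)\theta)|}{|\sin\theta|\sqrt{1+a^2-2a\cos\theta}}, \] and let $g_m(0;a)$ (and the values at $\pm\pi$, $0$ where $\sin\theta=0$) be defined by continuous extension. Then \[ \max_{\theta\in[-\pi,\pi]}g_m(\theta;a)=g_m(0;a)=\frac{m-a(m-1)}{1-a}. \]
   Context: $\mathbb{N}=\{1,2,\dots\}$. *)

theory Defs
  imports "HOL-Analysis.Analysis"
begin

text \<open>g_m(theta; a) on the points where sin theta is nonzero.\<close>
definition g :: "nat \<Rightarrow> real \<Rightarrow> real \<Rightarrow> real" where
  "g m a \<theta> = \<bar>sin (real m * \<theta>) - a * sin ((real m - 1) * \<theta>)\<bar> /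
       (\<bar>sin \<theta>\<bar> * sqrt (1 + a\<^sup>2 - 2 * a * cos \<theta>))"

end

theory Submission
  imports Defs
begin

text \<open>
  The continuous extension \<open>sin_ratio k t\<close> of \<open>sin (k t) / sin t\<close> satisfies
  \<open>sin_ratio (k + 1) t = cos t * sin_ratio k t + cos (k t)\<close>, hence \<open>\<bar>sin_ratio k t\<bar> \<le> k\<close>.
  The numerator of \<open>g m a t\<close> is \<open>sin t * ((cos t - a) * sin_ratio (m - 1) t + cos ((m - 1) t))\<close>
  and its denominator is \<open>\<bar>sin t\<bar> * \<bar>e\<^sup>i\<^sup>t - a\<bar>\<close>. Since both \<open>\<bar>cos t - a\<bar>\<close> and \<open>1 - a\<close>
  are at most \<open>\<bar>e\<^sup>i\<^sup>t - a\<bar>\<close>, the quotient is at most \<open>(m - 1) + 1 / (1 - a)\<close>, its value at \<open>0\<close>.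
\<close>

fun sin_ratio :: "nat \<Rightarrow> real \<Rightarrow> real" where
  "sin_ratio 0 t = 0"
| "sin_ratio (Suc k) t = cos t * sin_ratio k t + cos (real k * t)"

lemma sin_mult_eq_sin_ratio: "sin t * sin_ratio k t = sin (real k * t)"
proof (induction k)
  case 0
  then show ?case by simp
next
  case (Suc k)
  have "sin t * sin_ratio (Suc k) t = cos t * (sin t * sin_ratio k t) + sin t * cos (real k * t)"
    by (simp add: algebra_simps)
  also have "\<dots> = sin (real k * t + t)"
    using Suc by (simp add: sin_add algebra_simps)
  finally show ?case by (simp add: algebra_simps)
qed

lemma abs_sin_ratio_le: "\<bar>sin_ratio k t\<bar> \<le> real k"
proof (induction k)
  case 0
  then show ?case by simp
next
  case (Suc k)
  have "\<bar>cos t * sin_ratio k t\<bar> \<le> 1 * real k"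
    unfolding abs_mult by (rule mult_mono) (use Suc in auto)
  then show ?case
    using abs_cos_le_one[of "real k * t"] abs_triangle_ineq[of "cos t * sin_ratio k t" "cos (real k * t)"]
    by (simp only: sin_ratio.simps of_nat_Suc)
qed

lemma sin_ratio_0 [simp]: "sin_ratio k 0 = real k"
  by (induction k) auto

lemma continuous_on_sin_ratio: "continuous_on A (sin_ratio k)"
  by (induction k) (auto intro!: continuous_intros)

lemma cmod_cis_minus_of_real: "cmod (cis t - of_real a) = sqrt (1 + a\<^sup>2 - 2 * a * cos t)"
proof -
  have "(cos t - a)\<^sup>2 + (sin t)\<^sup>2 = 1 + a\<^sup>2 - 2 * a * cos t"
    using sin_cos_squared_add[of t] by (simp add: power2_diff algebra_simps)
  then show ?thesis by (simp add: cmod_def)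
qed

lemma abs_cos_minus_le_cmod: "\<bar>cos t - a\<bar> \<le> cmod (cis t - of_real a)"
  using abs_Re_le_cmod[of "cis t - of_real a"] by simp

lemma one_minus_abs_le_cmod: "1 - \<bar>a\<bar> \<le> cmod (cis t - of_real a)"
  using norm_triangle_ineq2[of "cis t" "of_real a"] by simp

definition g_ext :: "nat \<Rightarrow> real \<Rightarrow> real \<Rightarrow> real" where
  "g_ext m a t = \<bar>sin_ratio m t - a * sin_ratio (m - 1) t\<bar> / cmod (cis t - of_real a)"

lemma continuous_on_g_ext:
  assumes "\<bar>a\<bar> < 1"
  shows "continuous_on A (g_ext m a)"
proof -
  have "cmod (cis t - of_real a) \<noteq> 0" for t
    using one_minus_abs_le_cmod[of a t] assms by linarith
  then show ?thesis
    unfolding g_ext_def by (intro continuous_intros continuous_on_sin_ratio) auto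
qed

lemma g_ext_eq_g:
  assumes "m \<ge> 1" and "sin t \<noteq> 0"
  shows "g_ext m a t = g m a t"
proof -
  have "sin (real m * t) - a * sin ((real m - 1) * t)
      = sin t * (sin_ratio m t - a * sin_ratio (m - 1) t)"
    using sin_mult_eq_sin_ratio[of t m] sin_mult_eq_sin_ratio[of t "m - 1"] assms(1)
    by (simp add: of_nat_diff algebra_simps)
  then show ?thesis
    using assms(2) by (simp add: g_def g_ext_def cmod_cis_minus_of_real abs_mult)
qed

lemma g_ext_0:
  assumes "0 \<le> a" and "a < 1" and "m \<ge> 1"
  shows "g_ext m a 0 = (real m - a * (real m - 1)) / (1 - a)"
proof -
  have "a * (real m - 1) \<le> real m - 1"
    using assms by (simp add: mult_left_le_one_le)
  moreover have "cmod (1 - of_real a) = 1 - a"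
    using assms(2) by (metis abs_of_pos diff_gt_0_iff_gt norm_of_real of_real_1 of_real_diff)
  ultimately show ?thesis
    using assms by (simp add: g_ext_def of_nat_diff)
qed

lemma g_ext_le_g_ext_0:
  assumes "0 \<le> a" and "a < 1" and "m \<ge> 1"
  shows "g_ext m a t \<le> g_ext m a 0"
proof -
  obtain n where m: "m = Suc n"
    using assms(3) by (cases m) auto
  define D where "D = cmod (cis t - of_real a)"
  have D_ge: "1 - a \<le> D"
    using one_minus_abs_le_cmod[of a t] assms(1) by (simp add: D_def)
  have "sin_ratio m t - a * sin_ratio n t = (cos t - a) * sin_ratio n t + cos (real n * t)"
    by (simp add: m algebra_simps)
  also have "\<bar>\<dots>\<bar> \<le> D * real n + D / (1 - a)"
  proof (rule abs_triangle_ineq[THEN order_trans], rule add_mono)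
    show "\<bar>(cos t - a) * sin_ratio n t\<bar> \<le> D * real n"
      unfolding abs_mult D_def
      by (intro mult_mono abs_cos_minus_le_cmod abs_sin_ratio_le) auto
    have "\<bar>cos (real n * t)\<bar> * (1 - a) \<le> D"
      using abs_cos_le_one[of "real n * t"] D_ge assms(2)
      by (metis diff_ge_0_iff_ge less_imp_le mult_left_le_one_le order_trans abs_ge_zero)
    then show "\<bar>cos (real n * t)\<bar> \<le> D / (1 - a)"
      using assms(2) by (simp add: pos_le_divide_eq)
  qed
  finally have "g_ext m a t \<le> real n + 1 / (1 - a)"
    using D_ge assms(2) by (simp add: g_ext_def m flip: D_def) (simp add: divide_le_eq field_simps)
  also have "\<dots> = g_ext m a 0"
    using assms by (simp add: g_ext_0 m field_simps)
  finally show ?thesis .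
qed

theorem lemma5p1:
  fixes a :: real and m :: nat
  assumes "0 \<le> a" and "a < 1" and "m \<ge> 1"
  shows "\<exists>G. continuous_on {-pi..pi} G
             \<and> (\<forall>\<theta>\<in>{-pi..pi}. sin \<theta> \<noteq> 0 \<longrightarrow> G \<theta> = g m a \<theta>)
             \<and> (\<forall>\<theta>\<in>{-pi..pi}. G \<theta> \<le> G 0)
             \<and> G 0 = (real m - a * (real m - 1)) / (1 - a)"
proof (intro exI conjI ballI impI)
  show "continuous_on {-pi..pi} (g_ext m a)"
    using assms(1,2) by (intro continuous_on_g_ext) simp
  show "g_ext m a \<theta> = g m a \<theta>" if "sin \<theta> \<noteq> 0" for \<theta>
    using g_ext_eq_g[OF assms(3) that] .
  show "g_ext m a \<theta> \<le> g_ext m a 0" for \<theta>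
    using g_ext_le_g_ext_0[OF assms] .
  show "g_ext m a 0 = (real m - a * (real m - 1)) / (1 - a)"
    using g_ext_0[OF assms] .
qed

end
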